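(* Let $k$ be a unital commutative ring, $n$ a positive integer, and let $\varepsilon\in k$ be invertible. Then there exist isomorphisms of graded $k$-modules \[\operatorname{Tor}_{\star}^{\mathcal{PR}_n(\varepsilon)}(\mathbf{1},\mathbf{1})\cong\begin{cases}k&\star=0\\0&\star>0\end{cases}\quad\text{and}\quad\operatorname{Ext}^{\star}_{\mathcal{PR}_n(\varepsilon)}(\mathbf{1},\mathbf{1})\cong\begin{cases}k&\star=0\\0&\star>0.\end{cases}\]
   Context: A rook $n$-diagram is a graph on vertices $1,\dots,n$ (left column, top to bottom) and $\bar1,\dots,\bar n$ (right column), drawn in the rectangle they span, each of whose connected components is either an isolated vertex or a single edge joining a left vertex to a right vertex (a propagating edge); it is planar if no two edges cross. The rook algebra $\mathcal{R}_n(\varepsilon)$ is the free $k$-module on rook $n$-diagrams with product: identify the right column of $d_1$ with the left column of $d_2$ (middle column); let $\beta$ be the number of isolated vertices in the middle column; let $d_3$ join two outer vertices iff they are joined by a path; $d_1d_2=\varepsilon^\beta d_3$. The planar rook algebra $\mathcal{PR}_n(\varepsilon)$ is its subalgebra spanned by planar rook $n$-diagrams. The augmentation $\tau$ sends diagrams with $n$ propagating edges to $1$ and all others to $0$; $\mathbf{1}$ is $k$ with the algebra acting via $\tau$. *)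

theory Defs
  imports Main
begin

text \<open>A rook n-diagram is encoded by its set of propagating edges (i, j),
meaning left vertex i is joined to right vertex j (vertices numbered 1..n,
top to bottom).  Every other vertex is isolated.\<close>

type_synonym diagram = "(nat \<times> nat) set"

definition rook_diagram :: "nat \<Rightarrow> diagram \<Rightarrow> bool" where
  "rook_diagram n d \<longleftrightarrow> d \<subseteq> {1..n} \<times> {1..n}
     \<and> (\<forall>i j j'. (i, j) \<in> d \<longrightarrow> (i, j') \<in> d \<longrightarrow> j = j')
     \<and> (\<forall>i i' j. (i, j) \<in> d \<longrightarrow> (i', j) \<in> d \<longrightarrow> i = i')"

definition planar_diagram :: "diagram \<Rightarrow> bool" where
  "planar_diagram d \<longleftrightarrow> (\<forall>i j i' j'. (i, j) \<in> d \<longrightarrow> (i', j') \<in> d \<longrightarrow> i < i' \<longrightarrow> j < j')"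

definition PR_diagrams :: "nat \<Rightarrow> diagram set" where
  "PR_diagrams n = {d. rook_diagram n d \<and> planar_diagram d}"

text \<open>Product of diagrams: d1 d2 = eps^beta d3, with d3 = composite relation
and beta = number of isolated vertices in the middle column.\<close>
definition mid_isolated :: "nat \<Rightarrow> diagram \<Rightarrow> diagram \<Rightarrow> nat" where
  "mid_isolated n d1 d2 = card ({1..n} - (Range d1 \<union> Domain d2))"

definition diag_comp :: "diagram \<Rightarrow> diagram \<Rightarrow> diagram" where
  "diag_comp d1 d2 = d1 O d2"

definition augmentation :: "nat \<Rightarrow> diagram \<Rightarrow> 'k::comm_ring_1" where
  "augmentation n d = (if card d = n then 1 else 0)"

text \<open>PR_n(eps) is free over k with basis the planar rook n-diagrams, so
Tor^A(1,1) is the homology of the (unnormalised) bar complex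
1 \<otimes>_A B(A) \<otimes>_A 1, whose degree-m term is A^{\<otimes> m}, free with basis
the words of length m in planar diagrams; Ext_A(1,1) is the cohomology of the
k-dual complex.  Chains/cochains are k-valued functions on words supported on
the basis words.\<close>

definition bar_words :: "nat \<Rightarrow> nat \<Rightarrow> diagram list set" where
  "bar_words n m = {ws. length ws = m \<and> set ws \<subseteq> PR_diagrams n}"

text \<open>Coefficient of the basis word w in the boundary of the basis word ws:
d[d_1|...|d_m] = tau(d_1)[d_2|...|d_m]
   + sum_{i=1}^{m-1} (-1)^i [d_1|...|d_i d_{i+1}|...|d_m]
   + (-1)^m tau(d_m)[d_1|...|d_{m-1}].\<close>
definition bar_bdry_basis :: "nat \<Rightarrow> 'k::comm_ring_1 \<Rightarrow> diagram list \<Rightarrow> diagram list \<Rightarrow> 'k" where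
  "bar_bdry_basis n eps ws w =
     (if ws = [] then 0 else
        augmentation n (hd ws) * (if w = tl ws then 1 else 0)
      + (\<Sum>i\<in>{1..<length ws}.
           (-1) ^ i * eps ^ mid_isolated n (ws ! (i - 1)) (ws ! i)
           * (if w = take (i - 1) ws @ [diag_comp (ws ! (i - 1)) (ws ! i)] @ drop (i + 1) ws
              then 1 else 0))
      + (-1) ^ length ws * augmentation n (last ws) * (if w = butlast ws then 1 else 0))"

definition bar_chains :: "nat \<Rightarrow> nat \<Rightarrow> (diagram list \<Rightarrow> 'k::comm_ring_1) set" where
  "bar_chains n m = {c. \<forall>w. w \<notin> bar_words n m \<longrightarrow> c w = 0}"

definition bar_bdry :: "nat \<Rightarrow> 'k::comm_ring_1 \<Rightarrow> nat \<Rightarrow> (diagram list \<Rightarrow> 'k) \<Rightarrow> (diagram list \<Rightarrow> 'k)" where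
  "bar_bdry n eps m c = (\<lambda>w. \<Sum>u\<in>bar_words n m. c u * bar_bdry_basis n eps u w)"

definition Tor_cycles :: "nat \<Rightarrow> 'k::comm_ring_1 \<Rightarrow> nat \<Rightarrow> (diagram list \<Rightarrow> 'k) set" where
  "Tor_cycles n eps m = {c \<in> bar_chains n m. bar_bdry n eps m c = (\<lambda>_. 0)}"

definition Tor_boundaries :: "nat \<Rightarrow> 'k::comm_ring_1 \<Rightarrow> nat \<Rightarrow> (diagram list \<Rightarrow> 'k) set" where
  "Tor_boundaries n eps m = bar_bdry n eps (Suc m) ` bar_chains n (Suc m)"

definition bar_cobdry :: "nat \<Rightarrow> 'k::comm_ring_1 \<Rightarrow> nat \<Rightarrow> (diagram list \<Rightarrow> 'k) \<Rightarrow> (diagram list \<Rightarrow> 'k)" where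
  "bar_cobdry n eps m f = (\<lambda>u. if u \<in> bar_words n (Suc m)
        then (\<Sum>w\<in>bar_words n m. bar_bdry_basis n eps u w * f w) else 0)"

definition Ext_cocycles :: "nat \<Rightarrow> 'k::comm_ring_1 \<Rightarrow> nat \<Rightarrow> (diagram list \<Rightarrow> 'k) set" where
  "Ext_cocycles n eps m = {f \<in> bar_chains n m. bar_cobdry n eps m f = (\<lambda>_. 0)}"

definition Ext_coboundaries :: "nat \<Rightarrow> 'k::comm_ring_1 \<Rightarrow> nat \<Rightarrow> (diagram list \<Rightarrow> 'k) set" where
  "Ext_coboundaries n eps m =
     (case m of 0 \<Rightarrow> {\<lambda>_. 0} | Suc p \<Rightarrow> bar_cobdry n eps p ` bar_chains n p)"

text \<open>Z/B is isomorphic to k as a k-module: there is a k-linear surjection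
Z \<rightarrow> k with kernel exactly B (first isomorphism theorem).\<close>
definition quotient_iso_ring :: "('a \<Rightarrow> 'k::comm_ring_1) set \<Rightarrow> ('a \<Rightarrow> 'k) set \<Rightarrow> bool" where
  "quotient_iso_ring Z B \<longleftrightarrow> (\<exists>f :: ('a \<Rightarrow> 'k) \<Rightarrow> 'k.
      (\<forall>c\<in>Z. \<forall>c'\<in>Z. \<forall>a b. f (\<lambda>x. a * c x + b * c' x) = a * f c + b * f c')
      \<and> f ` Z = UNIV \<and> {c \<in> Z. f c = 0} = B)"

definition quotient_zero :: "('a \<Rightarrow> 'k) set \<Rightarrow> ('a \<Rightarrow> 'k) set \<Rightarrow> bool" where
  "quotient_zero Z B \<longleftrightarrow> Z \<subseteq> B"

end

theory Submission
  imports Defs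
begin

text \<open>Let \<open>E = \<Sum>\<^sub>S (- 1/eps)^(n - |S|) Id\<^sub>S\<close>, summed over \<open>S \<subseteq> {1..n}\<close>, where \<open>Id\<^sub>S\<close> is the
  partial identity on \<open>S\<close>. Then \<open>a E = tau(a) E\<close> for every planar rook diagram \<open>a\<close>: the only
  planar rook diagram with \<open>n\<close> propagating edges is the identity, and otherwise some right
  vertex \<open>j\<close> of \<open>a\<close> is isolated, so the terms of \<open>a E\<close> for \<open>S\<close> and \<open>S \<union> {j}\<close> are the same
  diagram, the first with one more isolated middle vertex, and they cancel. Moreover
  \<open>tau(E) = 1\<close>. Hence appending \<open>E\<close>, \<open>[a\<^sub>1|...|a\<^sub>m] \<mapsto> [a\<^sub>1|...|a\<^sub>m|E]\<close>, is a contracting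
  homotopy of the bar complex in positive degrees, and its transpose contracts the dual
  complex. In degree 0 both differentials vanish and both complexes are \<open>k\<close>.\<close>

lemma finite_PR_diagrams: "finite (PR_diagrams n)"
proof (rule finite_subset)
  show "PR_diagrams n \<subseteq> Pow ({1..n} \<times> {1..n})"
    by (auto simp: PR_diagrams_def rook_diagram_def)
qed simp

lemma finite_bar_words: "finite (bar_words n m)"
  using finite_lists_length_eq[OF finite_PR_diagrams, of n m]
  by (simp add: bar_words_def conj_commute)

lemma bar_words_0: "bar_words n 0 = {[]}"
  by (auto simp: bar_words_def)

lemma length_bar_words: "v \<in> bar_words n m \<Longrightarrow> length v = m"
  by (simp add: bar_words_def)

lemma last_bar_words: "v \<in> bar_words n m \<Longrightarrow> v \<noteq> [] \<Longrightarrow> last v \<in> PR_diagrams n"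
  by (auto simp: bar_words_def)

lemma snoc_in_bar_words_Suc_iff:
  "v @ [x] \<in> bar_words n (Suc m) \<longleftrightarrow> v \<in> bar_words n m \<and> x \<in> PR_diagrams n"
  by (auto simp: bar_words_def)

lemma sum_bar_words_Suc:
  "(\<Sum>u\<in>bar_words n (Suc m). h u) = (\<Sum>v\<in>bar_words n m. \<Sum>x\<in>PR_diagrams n. h (v @ [x]))"
proof -
  have "bar_words n (Suc m) = (\<lambda>(v, x). v @ [x]) ` (bar_words n m \<times> PR_diagrams n)"
  proof (intro set_eqI iffI)
    fix u assume "u \<in> bar_words n (Suc m)"
    moreover from this obtain v x where "u = v @ [x]"
      by (metis length_bar_words nat.distinct(1) list.size(3) rev_exhaust)
    ultimately show "u \<in> (\<lambda>(v, x). v @ [x]) ` (bar_words n m \<times> PR_diagrams n)"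
      by (auto simp: snoc_in_bar_words_Suc_iff)
  qed (auto simp: snoc_in_bar_words_Suc_iff)
  moreover have "inj_on (\<lambda>(v, x). v @ [x]) (bar_words n m \<times> PR_diagrams n)"
    by (auto simp: inj_on_def)
  ultimately show ?thesis
    by (simp add: sum.reindex sum.cartesian_product split_def)
qed

lemma Id_on_in_PR_diagrams: "S \<subseteq> {1..n} \<Longrightarrow> Id_on S \<in> PR_diagrams n"
  by (auto simp: PR_diagrams_def rook_diagram_def planar_diagram_def)

lemma card_Id_on: "card (Id_on S) = card S"
proof -
  have "Id_on S = (\<lambda>x. (x, x)) ` S"
    by (auto simp: Id_on_def)
  then show ?thesis
    by (simp add: card_image inj_on_def)
qed

lemma card_Domain_rook_diagram: "rook_diagram n a \<Longrightarrow> card (Domain a) = card a"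
  unfolding rook_diagram_def Domain_fst by (intro card_image inj_onI) auto

lemma card_Range_rook_diagram: "rook_diagram n a \<Longrightarrow> card (Range a) = card a"
  unfolding rook_diagram_def Range_snd by (intro card_image inj_onI) auto

lemma rook_diagram_converse: "rook_diagram n a \<Longrightarrow> rook_diagram n (a\<inverse>)"
  by (auto simp: rook_diagram_def)

lemma planar_rook_diagram_converse:
  assumes "rook_diagram n a" and "planar_diagram a"
  shows "planar_diagram (a\<inverse>)"
  unfolding planar_diagram_def
proof (intro allI impI)
  fix j i j' i' assume "(j, i) \<in> a\<inverse>" "(j', i') \<in> a\<inverse>" "j < j'"
  then have e: "(i, j) \<in> a" "(i', j') \<in> a"
    by auto
  have "\<not> i' < i"
    using assms(2) e \<open>j < j'\<close> unfolding planar_diagram_def by (meson less_asym)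
  moreover have "i \<noteq> i'"
    using assms(1) e \<open>j < j'\<close> unfolding rook_diagram_def by blast
  ultimately show "i < i'"
    by simp
qed

text \<open>Counting argument: the edges starting in \<open>{1..i}\<close> are \<open>i\<close> many, and by planarity
  they end in \<open>{1..j}\<close>.\<close>
lemma planar_rook_diagram_fst_le_snd:
  assumes rook: "rook_diagram n a" and planar: "planar_diagram a"
    and dom: "Domain a = {1..n}" and ij: "(i, j) \<in> a"
  shows "i \<le> j"
proof -
  define D where "D = {p \<in> a. fst p \<le> i}"
  have sub: "a \<subseteq> {1..n} \<times> {1..n}"
    using rook by (simp add: rook_diagram_def)
  have inj_fst: "inj_on fst D" and inj_snd: "inj_on snd D"
    using rook by (auto simp: rook_diagram_def D_def inj_on_def)
  have "fst ` D = {1..i}"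
  proof
    show "{1..i} \<subseteq> fst ` D"
    proof
      fix i' assume i': "i' \<in> {1..i}"
      moreover have "i \<le> n"
        using ij sub by auto
      ultimately have "i' \<in> Domain a"
        using dom by auto
      then obtain j' where "(i', j') \<in> a"
        by blast
      with i' show "i' \<in> fst ` D"
        by (force simp: D_def)
    qed
  qed (use sub in \<open>auto simp: D_def\<close>)
  then have "card D = i"
    using card_image[OF inj_fst] by simp
  moreover have "snd ` D \<subseteq> {1..j}"
  proof
    fix y assume "y \<in> snd ` D"
    then obtain i' where i': "(i', y) \<in> a" "i' \<le> i"
      by (auto simp: D_def)
    have "y \<le> j"
    proof (cases "i' < i")
      case True
      with planar i'(1) ij have "y < j"
        unfolding planar_diagram_def by blast
      then show ?thesis
        by simp
    next
      case False
      with i'(2) have "i' = i"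
        by simp
      with rook i'(1) ij show ?thesis
        unfolding rook_diagram_def by blast
    qed
    with i' sub show "y \<in> {1..j}"
      by auto
  qed
  then have "card D \<le> j"
    using card_inj_on_le[OF inj_snd] by (metis card_atLeastAtMost diff_Suc_1 finite_atLeastAtMost)
  ultimately show ?thesis
    by simp
qed

lemma PR_diagram_card_eq_Id_on:
  assumes a: "a \<in> PR_diagrams n" and card: "card a = n"
  shows "a = Id_on {1..n}"
proof -
  have rook: "rook_diagram n a" and planar: "planar_diagram a"
    using a by (auto simp: PR_diagrams_def)
  have "Domain a \<subseteq> {1..n}" "Range a \<subseteq> {1..n}"
    using rook by (auto simp: rook_diagram_def)
  then have dom: "Domain a = {1..n}" and ran: "Range a = {1..n}"
    using card card_Domain_rook_diagram[OF rook] card_Range_rook_diagram[OF rook]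
    by (simp_all add: card_subset_eq)
  have diag: "i = j" if "(i, j) \<in> a" for i j
  proof (rule antisym)
    show "i \<le> j"
      using planar_rook_diagram_fst_le_snd[OF rook planar dom that] .
    show "j \<le> i"
      using planar_rook_diagram_fst_le_snd[OF rook_diagram_converse[OF rook]
          planar_rook_diagram_converse[OF rook planar]] ran that
      by simp
  qed
  show ?thesis
  proof (intro subset_antisym subsetI)
    fix p assume "p \<in> a"
    moreover obtain i j where p: "p = (i, j)"
      by fastforce
    ultimately have "i = j" and "i \<in> Domain a"
      using diag by blast+
    with p dom show "p \<in> Id_on {1..n}"
      by (simp add: Id_on_iff)
  next
    fix p assume "p \<in> Id_on {1..n}"
    then obtain i where p: "p = (i, i)" and "i \<in> Domain a"
      using dom by auto
    then obtain j where "(i, j) \<in> a"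
      by blast
    with p diag show "p \<in> a"
      by blast
  qed
qed

section \<open>The element E\<close>

definition integral_coeff :: "'k::comm_ring_1 \<Rightarrow> nat \<Rightarrow> nat set \<Rightarrow> 'k" where
  "integral_coeff iv n S = (- iv) ^ (n - card S)"

text \<open>The element \<open>E\<close> as a coefficient function on diagrams, with \<open>iv\<close> standing for \<open>1/eps\<close>.\<close>
definition tau_integral :: "'k::comm_ring_1 \<Rightarrow> nat \<Rightarrow> diagram \<Rightarrow> 'k" where
  "tau_integral iv n x =
     (\<Sum>S\<in>Pow {1..n}. integral_coeff iv n S * (if x = Id_on S then 1 else 0))"

lemma tau_integral_eq_0: "x \<notin> PR_diagrams n \<Longrightarrow> tau_integral iv n x = 0"
  unfolding tau_integral_def using Id_on_in_PR_diagrams[of _ n] by (intro sum.neutral) auto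

lemma sum_PR_diagrams_tau_integral:
  "(\<Sum>x\<in>PR_diagrams n. tau_integral iv n x * G x)
     = (\<Sum>S\<in>Pow {1..n}. integral_coeff iv n S * G (Id_on S))"
proof -
  have "(\<Sum>x\<in>PR_diagrams n. tau_integral iv n x * G x)
      = (\<Sum>x\<in>PR_diagrams n. \<Sum>S\<in>Pow {1..n}.
           integral_coeff iv n S * (if x = Id_on S then G x else 0))"
    unfolding tau_integral_def sum_distrib_right by (intro sum.cong refl) simp
  also have "\<dots> = (\<Sum>S\<in>Pow {1..n}. \<Sum>x\<in>PR_diagrams n.
           integral_coeff iv n S * (if x = Id_on S then G x else 0))"
    by (rule sum.swap)
  also have "\<dots> = (\<Sum>S\<in>Pow {1..n}. integral_coeff iv n S * G (Id_on S))"
    by (intro sum.cong refl) (simp add: finite_PR_diagrams Id_on_in_PR_diagrams flip: sum_distrib_left)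
  finally show ?thesis .
qed

lemma sum_Pow_insert:
  assumes "finite A" "x \<notin> A"
  shows "(\<Sum>X\<in>Pow (insert x A). g X) = (\<Sum>X\<in>Pow A. g X + g (insert x X))"
proof -
  have "(\<Sum>X\<in>Pow (insert x A). g X) = (\<Sum>X\<in>Pow A. g X) + (\<Sum>X\<in>insert x ` Pow A. g X)"
    unfolding Pow_insert by (rule sum.union_disjoint) (use assms in auto)
  also have "(\<Sum>X\<in>insert x ` Pow A. g X) = (\<Sum>X\<in>Pow A. g (insert x X))"
    by (subst sum.reindex) (use assms in \<open>auto intro!: inj_onI simp: o_def\<close>)
  finally show ?thesis
    by (simp add: sum.distrib)
qed

lemma left_mult_summands_cancel:
  fixes eps iv :: "'k::comm_ring_1"
  assumes ei: "eps * iv = 1" and j: "j \<in> {1..n}" "j \<notin> Range a" and S: "S \<subseteq> {1..n} - {j}"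
  shows "integral_coeff iv n S * (eps ^ mid_isolated n a (Id_on S) * F (diag_comp a (Id_on S)))
    + integral_coeff iv n (insert j S)
      * (eps ^ mid_isolated n a (Id_on (insert j S)) * F (diag_comp a (Id_on (insert j S)))) = 0"
proof -
  have finS: "finite S" and jS: "j \<notin> S"
    using S by (auto intro: finite_subset)
  have "insert j S \<subseteq> {1..n}"
    using S j(1) by blast
  then have "card (insert j S) \<le> n"
    using card_mono[OF finite_atLeastAtMost] by (metis card_atLeastAtMost diff_Suc_1)
  then have "n - card S = Suc (n - card (insert j S))"
    using finS jS by simp
  then have coeff: "integral_coeff iv n S = - iv * integral_coeff iv n (insert j S)"
    by (simp add: integral_coeff_def)
  have "{1..n} - (Range a \<union> S) = insert j ({1..n} - (Range a \<union> insert j S))"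
    using j jS by blast
  then have mid: "mid_isolated n a (Id_on S) = Suc (mid_isolated n a (Id_on (insert j S)))"
    unfolding mid_isolated_def Domain_Id_on by (simp only:) (rule card_insert_disjoint; blast)
  have comp: "diag_comp a (Id_on S) = diag_comp a (Id_on (insert j S))"
    using j(2) unfolding diag_comp_def by (auto simp: Id_on_iff)
  have "integral_coeff iv n S * (eps ^ mid_isolated n a (Id_on S) * F (diag_comp a (Id_on S)))
    = - (eps * iv) * (integral_coeff iv n (insert j S)
      * (eps ^ mid_isolated n a (Id_on (insert j S)) * F (diag_comp a (Id_on (insert j S)))))"
    unfolding coeff mid comp by (simp add: algebra_simps)
  with ei show ?thesis
    by simp
qed

text \<open>This is \<open>a E = tau(a) E\<close>, paired with an arbitrary \<open>F\<close>.\<close>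
lemma left_mult_tau_integral:
  fixes eps iv :: "'k::comm_ring_1"
  assumes ei: "eps * iv = 1" and a: "a \<in> PR_diagrams n"
  shows "(\<Sum>S\<in>Pow {1..n}. integral_coeff iv n S * (eps ^ mid_isolated n a (Id_on S)
            * F (diag_comp a (Id_on S))))
       = augmentation n a * (\<Sum>S\<in>Pow {1..n}. integral_coeff iv n S * F (Id_on S))"
proof (cases "card a = n")
  case True
  then have "a = Id_on {1..n}"
    by (rule PR_diagram_card_eq_Id_on[OF a])
  then have "diag_comp a (Id_on S) = Id_on S" and "mid_isolated n a (Id_on S) = 0"
    if "S \<in> Pow {1..n}" for S
    using that by (auto simp: diag_comp_def mid_isolated_def)
  with True show ?thesis
    by (simp add: augmentation_def)
next
  case False
  have rook: "rook_diagram n a"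
    using a by (simp add: PR_diagrams_def)
  then have "Range a \<subseteq> {1..n}" and "Range a \<noteq> {1..n}"
    using card_Range_rook_diagram[OF rook] False by (auto simp: rook_diagram_def)
  then obtain j where j: "j \<in> {1..n}" "j \<notin> Range a"
    by blast
  define A where "A = {1..n} - {j}"
  have A: "{1..n} = insert j A" "finite A" "j \<notin> A"
    using j by (auto simp: A_def)
  have "(\<Sum>S\<in>Pow {1..n}. integral_coeff iv n S * (eps ^ mid_isolated n a (Id_on S)
            * F (diag_comp a (Id_on S)))) = 0"
    unfolding A(1) sum_Pow_insert[OF A(2,3)]
    using left_mult_summands_cancel[OF ei j] by (intro sum.neutral) (simp add: A_def)
  with False show ?thesis
    by (simp add: augmentation_def)
qed

lemma augmentation_tau_integral:
  "(\<Sum>S\<in>Pow {1..n}. integral_coeff iv n S * augmentation n (Id_on S)) = (1::'k::comm_ring_1)"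
proof -
  have "integral_coeff iv n S * augmentation n (Id_on S) = (if S = {1..n} then 1 else (0::'k))"
    if "S \<in> Pow {1..n}" for S
  proof (cases "S = {1..n}")
    case False
    with that have "card S \<noteq> n"
      using card_subset_eq[of "{1..n}" S] by auto
    with False show ?thesis
      by (simp add: augmentation_def card_Id_on)
  qed (simp add: augmentation_def integral_coeff_def card_Id_on)
  then have "(\<Sum>S\<in>Pow {1..n}. integral_coeff iv n S * augmentation n (Id_on S))
      = (\<Sum>S\<in>Pow {1..n}. if S = {1..n} then 1 else (0::'k))"
    by (rule sum.cong[OF refl])
  then show ?thesis
    by simp
qed

section \<open>Contracting homotopies of the bar complex\<close>

lemma bar_bdry_basis_snoc:
  assumes v: "v \<noteq> []"
  shows "bar_bdry_basis n eps (v @ [x]) w =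
    augmentation n (hd v) * (if w = tl v @ [x] then 1 else 0)
  + (\<Sum>i\<in>{1..<length v}. (-1) ^ i * eps ^ mid_isolated n (v ! (i - 1)) (v ! i)
       * (if w = (take (i - 1) v @ [diag_comp (v ! (i - 1)) (v ! i)] @ drop (i + 1) v) @ [x]
          then 1 else 0))
  + (-1) ^ length v * eps ^ mid_isolated n (last v) x
       * (if w = butlast v @ [diag_comp (last v) x] then 1 else 0)
  + (-1) ^ Suc (length v) * augmentation n x * (if w = v then 1 else 0)"
proof -
  define face where "face u i = (-1) ^ i * eps ^ mid_isolated n (u ! (i - 1)) (u ! i)
    * (if w = take (i - 1) u @ [diag_comp (u ! (i - 1)) (u ! i)] @ drop (i + 1) u then 1 else 0)"
    for u i
  have "sum (face (v @ [x])) {1..<length (v @ [x])}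
      = sum (face (v @ [x])) {1..<length v} + face (v @ [x]) (length v)"
    using v by (simp add: sum.atLeastLessThan_Suc Suc_le_eq)
  also have "sum (face (v @ [x])) {1..<length v}
      = (\<Sum>i\<in>{1..<length v}. (-1) ^ i * eps ^ mid_isolated n (v ! (i - 1)) (v ! i)
          * (if w = (take (i - 1) v @ [diag_comp (v ! (i - 1)) (v ! i)] @ drop (i + 1) v) @ [x]
             then 1 else 0))"
    by (intro sum.cong refl) (auto simp: face_def nth_append)
  also have "face (v @ [x]) (length v) = (-1) ^ length v * eps ^ mid_isolated n (last v) x
       * (if w = butlast v @ [diag_comp (last v) x] then 1 else 0)"
    using v by (simp add: face_def nth_append last_conv_nth butlast_conv_take)
  finally show ?thesis
    using v unfolding bar_bdry_basis_def face_def by (simp add: algebra_simps)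
qed

definition bar_homotopy :: "'k::comm_ring_1 \<Rightarrow> nat \<Rightarrow> (diagram list \<Rightarrow> 'k) \<Rightarrow> diagram list \<Rightarrow> 'k"
  where "bar_homotopy iv n c w =
    (if w = [] then 0 else c (butlast w) * tau_integral iv n (last w))"

definition bar_cohomotopy :: "'k::comm_ring_1 \<Rightarrow> nat \<Rightarrow> (diagram list \<Rightarrow> 'k) \<Rightarrow> diagram list \<Rightarrow> 'k"
  where "bar_cohomotopy iv n f v = (\<Sum>x\<in>PR_diagrams n. tau_integral iv n x * f (v @ [x]))"

definition snoc_integral :: "'k::comm_ring_1 \<Rightarrow> nat \<Rightarrow> diagram list \<Rightarrow> diagram list \<Rightarrow> 'k"
  where "snoc_integral iv n t w =
    (\<Sum>S\<in>Pow {1..n}. integral_coeff iv n S * (if w = t @ [Id_on S] then 1 else 0))"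

lemma snoc_integral_eq:
  "snoc_integral iv n t w = (if w \<noteq> [] \<and> butlast w = t then tau_integral iv n (last w) else 0)"
proof (cases "w \<noteq> [] \<and> butlast w = t")
  case True
  then have "w = t @ [y] \<longleftrightarrow> last w = y" for y
    by (metis append_butlast_last_id butlast_snoc last_snoc)
  with True show ?thesis
    by (simp add: snoc_integral_def tau_integral_def)
next
  case False
  then have "w \<noteq> t @ [y]" for y
    by auto
  then show ?thesis
    by (simp add: snoc_integral_def if_not_P[OF False])
qed

lemma bar_homotopy_bar_bdry_basis:
  assumes v: "v \<noteq> []"
  shows "bar_homotopy iv n (bar_bdry_basis n eps v) w =
      augmentation n (hd v) * snoc_integral iv n (tl v) w
    + (\<Sum>i\<in>{1..<length v}. (-1) ^ i * eps ^ mid_isolated n (v ! (i - 1)) (v ! i)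
        * snoc_integral iv n (take (i - 1) v @ [diag_comp (v ! (i - 1)) (v ! i)] @ drop (i + 1) v) w)
    + (-1) ^ length v * augmentation n (last v) * snoc_integral iv n (butlast v) w"
proof (cases "w = []")
  case False
  then have "snoc_integral iv n t w = (if butlast w = t then 1 else 0) * tau_integral iv n (last w)"
    for t
    by (simp add: snoc_integral_eq)
  with v False show ?thesis
    unfolding bar_homotopy_def bar_bdry_basis_def
    by (simp add: distrib_right sum_distrib_right mult.assoc)
qed (simp add: snoc_integral_eq bar_homotopy_def)

text \<open>Expanding the faces of \<open>[v|E]\<close>: the second to last one is \<open>(last v) E = tau(last v) E\<close>,
  the last one is \<open>tau(E) v = v\<close>.\<close>
lemma bar_cohomotopy_bar_bdry_basis_expand:
  fixes eps :: "'k::comm_ring_1"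
  assumes ei: "eps * iv = 1" and v: "v \<noteq> []" and last: "last v \<in> PR_diagrams n"
  shows "bar_cohomotopy iv n (\<lambda>u. bar_bdry_basis n eps u w) v =
      augmentation n (hd v) * snoc_integral iv n (tl v) w
    + (\<Sum>i\<in>{1..<length v}. (-1) ^ i * eps ^ mid_isolated n (v ! (i - 1)) (v ! i)
        * snoc_integral iv n (take (i - 1) v @ [diag_comp (v ! (i - 1)) (v ! i)] @ drop (i + 1) v) w)
    + (-1) ^ length v * augmentation n (last v) * snoc_integral iv n (butlast v) w
    + (-1) ^ Suc (length v) * (if w = v then 1 else 0)"
proof -
  define c where "c = integral_coeff iv n"
  define face where "face i = (-1) ^ i * eps ^ mid_isolated n (v ! (i - 1)) (v ! i)" for i
  define merge where "merge i = take (i - 1) v @ [diag_comp (v ! (i - 1)) (v ! i)] @ drop (i + 1) v"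
    for i
  have "bar_cohomotopy iv n (\<lambda>u. bar_bdry_basis n eps u w) v
      = (\<Sum>S\<in>Pow {1..n}. c S * (augmentation n (hd v) * (if w = tl v @ [Id_on S] then 1 else 0)))
      + (\<Sum>S\<in>Pow {1..n}. c S * (\<Sum>i\<in>{1..<length v}. face i
          * (if w = merge i @ [Id_on S] then 1 else 0)))
      + (\<Sum>S\<in>Pow {1..n}. c S * ((-1) ^ length v * eps ^ mid_isolated n (last v) (Id_on S)
          * (if w = butlast v @ [diag_comp (last v) (Id_on S)] then 1 else 0)))
      + (\<Sum>S\<in>Pow {1..n}. c S * ((-1) ^ Suc (length v) * augmentation n (Id_on S)
          * (if w = v then 1 else 0)))"
    unfolding bar_cohomotopy_def sum_PR_diagrams_tau_integral c_def[symmetric]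
      bar_bdry_basis_snoc[OF v] face_def merge_def
    by (simp only: distrib_left sum.distrib)
  also have "(\<Sum>S\<in>Pow {1..n}. c S * (augmentation n (hd v) * (if w = tl v @ [Id_on S] then 1 else 0)))
      = augmentation n (hd v) * snoc_integral iv n (tl v) w"
    by (simp add: c_def snoc_integral_def sum_distrib_left mult.left_commute)
  also have "(\<Sum>S\<in>Pow {1..n}. c S * (\<Sum>i\<in>{1..<length v}. face i
          * (if w = merge i @ [Id_on S] then 1 else 0)))
      = (\<Sum>i\<in>{1..<length v}. face i * snoc_integral iv n (merge i) w)"
    unfolding snoc_integral_def sum_distrib_left c_def
    by (subst sum.swap) (simp add: mult.left_commute)
  also have "(\<Sum>S\<in>Pow {1..n}. c S * ((-1) ^ length v * eps ^ mid_isolated n (last v) (Id_on S)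
          * (if w = butlast v @ [diag_comp (last v) (Id_on S)] then 1 else 0)))
      = (-1) ^ length v * augmentation n (last v) * snoc_integral iv n (butlast v) w"
    unfolding mult.assoc mult.left_commute[of _ "(-1) ^ length v"] sum_distrib_left[symmetric]
      c_def snoc_integral_def
      left_mult_tau_integral[OF ei last, of "\<lambda>y. if w = butlast v @ [y] then 1 else 0"] ..
  also have "(\<Sum>S\<in>Pow {1..n}. c S * ((-1) ^ Suc (length v) * augmentation n (Id_on S)
          * (if w = v then 1 else 0)))
      = (-1) ^ Suc (length v) * (if w = v then 1 else 0)"
  proof -
    have "(\<Sum>S\<in>Pow {1..n}. c S * ((-1) ^ Suc (length v) * augmentation n (Id_on S)
          * (if w = v then 1 else 0)))
        = (-1) ^ Suc (length v) * (if w = v then 1 else 0)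
          * (\<Sum>S\<in>Pow {1..n}. c S * augmentation n (Id_on S))"
      by (simp add: sum_distrib_left mult_ac)
    then show ?thesis
      by (simp only: c_def augmentation_tau_integral mult_1_right)
  qed
  finally show ?thesis
    by (simp only: face_def merge_def)
qed

lemma bar_cohomotopy_bar_bdry_basis:
  fixes eps :: "'k::comm_ring_1"
  assumes "eps * iv = 1" and "v \<noteq> []" and "last v \<in> PR_diagrams n"
  shows "bar_cohomotopy iv n (\<lambda>u. bar_bdry_basis n eps u w) v
       = bar_homotopy iv n (bar_bdry_basis n eps v) w + (-1) ^ Suc (length v) * (if w = v then 1 else 0)"
  using assms by (simp add: bar_cohomotopy_bar_bdry_basis_expand bar_homotopy_bar_bdry_basis)

lemma sum_bar_chain_delta:
  assumes "c \<in> bar_chains n m"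
  shows "(\<Sum>u\<in>bar_words n m. c u * (if w = u then 1 else 0)) = c w"
  using assms by (auto simp: bar_chains_def finite_bar_words if_distrib cong: if_cong)

lemma bar_homotopy_in_bar_chains:
  assumes c: "c \<in> bar_chains n m"
  shows "bar_homotopy iv n c \<in> bar_chains n (Suc m)"
  unfolding bar_chains_def
proof (intro CollectI allI impI)
  fix w assume w: "w \<notin> bar_words n (Suc m)"
  show "bar_homotopy iv n c w = 0"
  proof (cases w rule: rev_cases)
    case (snoc u x)
    with w have "u \<notin> bar_words n m \<or> x \<notin> PR_diagrams n"
      by (simp add: snoc_in_bar_words_Suc_iff)
    with c snoc show ?thesis
      by (auto simp: bar_homotopy_def bar_chains_def tau_integral_eq_0)
  qed (simp add: bar_homotopy_def)
qed

lemma bar_cohomotopy_in_bar_chains: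
  assumes f: "f \<in> bar_chains n (Suc m)"
  shows "bar_cohomotopy iv n f \<in> bar_chains n m"
  using f by (auto simp: bar_chains_def bar_cohomotopy_def snoc_in_bar_words_Suc_iff)

lemma sum_bar_homotopy_mult:
  "(\<Sum>u\<in>bar_words n (Suc m). bar_homotopy iv n c u * f u)
     = (\<Sum>v\<in>bar_words n m. c v * bar_cohomotopy iv n f v)"
  by (simp add: sum_bar_words_Suc bar_homotopy_def bar_cohomotopy_def sum_distrib_left mult_ac)

lemma bar_bdry_bar_homotopy:
  fixes eps :: "'k::comm_ring_1"
  assumes ei: "eps * iv = 1" and c: "c \<in> bar_chains n m" and m: "0 < m"
  shows "bar_bdry n eps (Suc m) (bar_homotopy iv n c) w
       = bar_homotopy iv n (bar_bdry n eps m c) w + (-1) ^ Suc m * c w"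
proof -
  have "bar_bdry n eps (Suc m) (bar_homotopy iv n c) w
      = (\<Sum>v\<in>bar_words n m. c v * bar_cohomotopy iv n (\<lambda>u. bar_bdry_basis n eps u w) v)"
    unfolding bar_bdry_def by (rule sum_bar_homotopy_mult)
  also have "\<dots> = (\<Sum>v\<in>bar_words n m. c v * bar_homotopy iv n (bar_bdry_basis n eps v) w
      + (-1) ^ Suc m * (c v * (if w = v then 1 else 0)))"
  proof (intro sum.cong refl)
    fix v assume v: "v \<in> bar_words n m"
    then have len: "length v = m"
      by (rule length_bar_words)
    with m have "v \<noteq> []"
      by auto
    with v len show "c v * bar_cohomotopy iv n (\<lambda>u. bar_bdry_basis n eps u w) v
        = c v * bar_homotopy iv n (bar_bdry_basis n eps v) w
          + (-1) ^ Suc m * (c v * (if w = v then 1 else 0))"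
      by (simp add: bar_cohomotopy_bar_bdry_basis[OF ei] last_bar_words algebra_simps)
  qed
  also have "\<dots> = (\<Sum>v\<in>bar_words n m. c v * bar_homotopy iv n (bar_bdry_basis n eps v) w)
      + (-1) ^ Suc m * (\<Sum>v\<in>bar_words n m. c v * (if w = v then 1 else 0))"
    by (simp only: sum.distrib sum_distrib_left)
  also have "(\<Sum>v\<in>bar_words n m. c v * bar_homotopy iv n (bar_bdry_basis n eps v) w)
      = bar_homotopy iv n (bar_bdry n eps m c) w"
    by (simp add: bar_homotopy_def bar_bdry_def sum_distrib_right mult.assoc)
  finally show ?thesis
    by (simp only: sum_bar_chain_delta[OF c])
qed

lemma bar_cohomotopy_bar_cobdry:
  fixes eps :: "'k::comm_ring_1"
  assumes ei: "eps * iv = 1" and f: "f \<in> bar_chains n (Suc m)" and v: "v \<in> bar_words n (Suc m)"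
  shows "bar_cohomotopy iv n (bar_cobdry n eps (Suc m) f) v
       = bar_cobdry n eps m (bar_cohomotopy iv n f) v + (-1) ^ Suc (Suc m) * f v"
proof -
  have "bar_cohomotopy iv n (bar_cobdry n eps (Suc m) f) v
      = (\<Sum>w\<in>bar_words n (Suc m). f w * bar_cohomotopy iv n (\<lambda>u. bar_bdry_basis n eps u w) v)"
  proof -
    have "bar_cohomotopy iv n (bar_cobdry n eps (Suc m) f) v
        = (\<Sum>x\<in>PR_diagrams n. \<Sum>w\<in>bar_words n (Suc m).
             f w * (tau_integral iv n x * bar_bdry_basis n eps (v @ [x]) w))"
      unfolding bar_cohomotopy_def bar_cobdry_def using v
      by (intro sum.cong refl) (simp add: snoc_in_bar_words_Suc_iff sum_distrib_left mult_ac)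
    also have "\<dots> = (\<Sum>w\<in>bar_words n (Suc m). \<Sum>x\<in>PR_diagrams n.
             f w * (tau_integral iv n x * bar_bdry_basis n eps (v @ [x]) w))"
      by (rule sum.swap)
    finally show ?thesis
      by (simp add: bar_cohomotopy_def sum_distrib_left)
  qed
  also have "\<dots> = (\<Sum>w\<in>bar_words n (Suc m). bar_homotopy iv n (bar_bdry_basis n eps v) w * f w
      + (-1) ^ Suc (Suc m) * (f w * (if v = w then 1 else 0)))"
  proof (intro sum.cong refl)
    fix w
    from v have "length v = Suc m"
      by (rule length_bar_words)
    moreover from this have "v \<noteq> []"
      by auto
    moreover have "(if w = v then 1 else 0) = (if v = w then 1 else (0::'k))"
      by simp
    ultimately show "f w * bar_cohomotopy iv n (\<lambda>u. bar_bdry_basis n eps u w) v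
        = bar_homotopy iv n (bar_bdry_basis n eps v) w * f w
          + (-1) ^ Suc (Suc m) * (f w * (if v = w then 1 else 0))"
      using v by (simp add: bar_cohomotopy_bar_bdry_basis[OF ei] last_bar_words algebra_simps)
  qed
  also have "\<dots> = (\<Sum>w\<in>bar_words n (Suc m). bar_homotopy iv n (bar_bdry_basis n eps v) w * f w)
      + (-1) ^ Suc (Suc m) * (\<Sum>w\<in>bar_words n (Suc m). f w * (if v = w then 1 else 0))"
    by (simp only: sum.distrib sum_distrib_left)
  also have "(\<Sum>w\<in>bar_words n (Suc m). bar_homotopy iv n (bar_bdry_basis n eps v) w * f w)
      = bar_cobdry n eps m (bar_cohomotopy iv n f) v"
    using v by (simp add: sum_bar_homotopy_mult bar_cobdry_def)
  finally show ?thesis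
    by (simp only: sum_bar_chain_delta[OF f])
qed

lemma bar_bdry_basis_singleton: "bar_bdry_basis n eps [x] w = 0"
  by (simp add: bar_bdry_basis_def)

lemma bar_bdry_0: "bar_bdry n eps 0 c = (\<lambda>_. 0)"
  by (simp add: bar_bdry_def bar_words_0 bar_bdry_basis_def)

lemma bar_bdry_Suc_0: "bar_bdry n eps (Suc 0) c = (\<lambda>_. 0)"
  unfolding bar_bdry_def
  by (auto simp: bar_words_def length_Suc_conv bar_bdry_basis_singleton intro!: sum.neutral)

lemma bar_cobdry_0: "bar_cobdry n eps 0 f = (\<lambda>_. 0)"
  unfolding bar_cobdry_def bar_words_0
  by (rule ext) (auto simp: bar_words_def length_Suc_conv bar_bdry_basis_singleton)

lemma bar_bdry_scale: "bar_bdry n eps m (\<lambda>w. a * c w) = (\<lambda>w. a * bar_bdry n eps m c w)"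
  by (simp add: bar_bdry_def sum_distrib_left mult.assoc)

lemma bar_cobdry_scale: "bar_cobdry n eps m (\<lambda>w. a * f w) = (\<lambda>w. a * bar_cobdry n eps m f w)"
  by (auto simp: bar_cobdry_def sum_distrib_left mult_ac)

lemma quotient_iso_ring_bar_chains_0:
  "quotient_iso_ring (bar_chains n 0 :: (diagram list \<Rightarrow> 'k::comm_ring_1) set) {\<lambda>_. 0}"
  unfolding quotient_iso_ring_def
proof (intro exI[of _ "\<lambda>c. c []"] conjI)
  show "(\<lambda>c. c []) ` (bar_chains n 0 :: (diagram list \<Rightarrow> 'k) set) = UNIV"
  proof (intro set_eqI iffI)
    fix a :: 'k
    have "(\<lambda>w. if w = [] then a else 0) \<in> bar_chains n 0"
      by (simp add: bar_chains_def bar_words_0)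
    then show "a \<in> (\<lambda>c. c []) ` bar_chains n 0"
      by (rule rev_image_eqI) simp
  qed simp
  show "{c \<in> bar_chains n 0. c [] = 0} = {\<lambda>_. 0 :: 'k}"
  proof (intro set_eqI iffI)
    fix c :: "diagram list \<Rightarrow> 'k" assume "c \<in> {c \<in> bar_chains n 0. c [] = 0}"
    then have "c w = 0" for w
      by (cases "w = []") (auto simp: bar_chains_def bar_words_0)
    then show "c \<in> {\<lambda>_. 0}"
      by auto
  qed (auto simp: bar_chains_def)
qed auto

lemma Tor_cycles_subset_boundaries:
  fixes eps :: "'k::comm_ring_1"
  assumes ei: "eps * iv = 1" and m: "0 < m"
  shows "Tor_cycles n eps m \<subseteq> Tor_boundaries n eps m"
proof
  fix z assume "z \<in> Tor_cycles n eps m"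
  then have z: "z \<in> bar_chains n m" and cycle: "bar_bdry n eps m z = (\<lambda>_. 0)"
    by (auto simp: Tor_cycles_def)
  define c where "c w = (-1) ^ Suc m * bar_homotopy iv n z w" for w
  have "c \<in> bar_chains n (Suc m)"
    using bar_homotopy_in_bar_chains[OF z] by (simp add: c_def bar_chains_def)
  moreover have "bar_bdry n eps (Suc m) c = z"
    unfolding c_def bar_bdry_scale bar_bdry_bar_homotopy[OF ei z m] cycle
    by (simp add: bar_homotopy_def fun_eq_iff)
  ultimately show "z \<in> Tor_boundaries n eps m"
    unfolding Tor_boundaries_def by blast
qed

lemma Ext_cocycles_subset_coboundaries:
  fixes eps :: "'k::comm_ring_1"
  assumes ei: "eps * iv = 1" and m: "0 < m"
  shows "Ext_cocycles n eps m \<subseteq> Ext_coboundaries n eps m"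
proof
  fix f assume "f \<in> Ext_cocycles n eps m"
  then have f: "f \<in> bar_chains n m" and cocycle: "bar_cobdry n eps m f = (\<lambda>_. 0)"
    by (auto simp: Ext_cocycles_def)
  obtain p where p: "m = Suc p"
    using m by (cases m) auto
  define g where "g = (\<lambda>v. (-1) ^ m * bar_cohomotopy iv n f v)"
  have "g \<in> bar_chains n p"
    using bar_cohomotopy_in_bar_chains[of f n p iv] f by (simp add: g_def bar_chains_def p)
  moreover have "bar_cobdry n eps p g = f"
  proof
    fix v
    show "bar_cobdry n eps p g v = f v"
    proof (cases "v \<in> bar_words n m")
      case True
      have "bar_cohomotopy iv n (bar_cobdry n eps m f) v = 0"
        by (simp add: cocycle bar_cohomotopy_def)
      moreover have "bar_cohomotopy iv n (bar_cobdry n eps m f) v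
          = bar_cobdry n eps p (bar_cohomotopy iv n f) v + (-1) ^ Suc m * f v"
        using bar_cohomotopy_bar_cobdry[OF ei] f True unfolding p .
      ultimately have "0 = bar_cobdry n eps p (bar_cohomotopy iv n f) v + (-1) ^ Suc m * f v"
        by simp
      then have "bar_cobdry n eps p (bar_cohomotopy iv n f) v = - ((-1) ^ Suc m * f v)"
        by (simp add: eq_neg_iff_add_eq_0)
      then show ?thesis
        by (simp add: g_def bar_cobdry_scale)
    next
      case False
      with f show ?thesis
        by (simp add: bar_cobdry_def bar_chains_def p)
    qed
  qed
  ultimately show "f \<in> Ext_coboundaries n eps m"
    unfolding Ext_coboundaries_def p by auto
qed

theorem theorem7p11:
  fixes n :: nat and eps :: "'k::comm_ring_1"
  assumes "n > 0" and "\<exists>e. eps * e = 1"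
  shows "quotient_iso_ring (Tor_cycles n eps 0) (Tor_boundaries n eps 0)
       \<and> (\<forall>m>0. quotient_zero (Tor_cycles n eps m) (Tor_boundaries n eps m))
       \<and> quotient_iso_ring (Ext_cocycles n eps 0) (Ext_coboundaries n eps 0)
       \<and> (\<forall>m>0. quotient_zero (Ext_cocycles n eps m) (Ext_coboundaries n eps m))"
proof -
  from assms(2) obtain iv where ei: "eps * iv = 1"
    by blast
  have "Tor_cycles n eps 0 = bar_chains n 0" and "Ext_cocycles n eps 0 = bar_chains n 0"
    by (simp_all add: Tor_cycles_def Ext_cocycles_def bar_bdry_0 bar_cobdry_0)
  moreover have "Tor_boundaries n eps 0 = {\<lambda>_. 0}" and "Ext_coboundaries n eps 0 = {\<lambda>_. 0}"
    unfolding Tor_boundaries_def Ext_coboundaries_def bar_bdry_Suc_0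
    by (auto intro!: image_eqI[where x = "\<lambda>_. 0"] simp: bar_chains_def)
  ultimately show ?thesis
    using quotient_iso_ring_bar_chains_0[of n] Tor_cycles_subset_boundaries[OF ei]
      Ext_cocycles_subset_coboundaries[OF ei]
    by (simp add: quotient_zero_def)
qed

end
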